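(* Let $\mathcal{B}=\{B_1,\dots,B_M\}$ be Boolean variables and $\mathcal{X}=\{X_1,\dots,X_N\}$ real variables. For every SMT formula $\phi$ over $\mathcal{B}$ and $\mathcal{X}$ belonging to any of the theories SMT($\mathcal{LRA}$), SMT($\mathcal{NRA}$), or SMT($\mathcal{RA}$), the set of models $\mathcal{M}(\phi)\subseteq\mathbb{B}^M\times\mathbb{R}^N$ belongs to the product $\sigma$-algebra $\mathcal{P}(\mathbb{B}^M)\times\mathcal{B}(\mathbb{R}^N)$. That is, SMT($\mathcal{LRA}$), SMT($\mathcal{NRA}$) and SMT($\mathcal{RA}$) are measurable theories.
   Context: $\mathbb{B}=\{\bot,\top\}$. An atomic formula is either a Boolean variable from $\mathcal{B}$ or a real arithmetical proposition $\theta$, built from variables in $\mathcal{X}$, real numbers and the symbols $+,\cdot,$ ^ (exponentiation) and $\le$ with their standard meaning; any such $\theta$ can be written as $\hat\theta(X_1,\dots,X_N)\le 0$ for a function $\hat\theta\colon\mathbb{R}^N\to\mathbb{R}$. SMT formulas are built from atomic formulas with $\lnot,\land,\lor$. In SMT($\mathcal{LRA}$) each $\hat\theta$ is linear, in SMT($\mathcal{NRA}$) polynomial, and in SMT($\mathcal{RA}$) unrestricted (any function obtained from variables and constants by addition, multiplication and exponentiation). A total interpretation is a pair $(I_{\mathcal{B}},I_{\mathcal{X}})$ with $I_{\mathcal{B}}\colon\mathcal{B}\to\mathbb{B}$, $I_{\mathcal{X}}\colon\mathcal{X}\to\mathbb{R}$; a Boolean atom gets value $I_{\mathcal{B}}$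 of it, a real atom $\theta$ is true iff $\hat\theta(I_{\mathcal{X}}(X_1),\dots,I_{\mathcal{X}}(X_N))\le 0$, extended through connectives in the usual way. The set of models is $\mathcal{M}(\phi)=\{((I_{\mathcal{B}}(B_i))_{i=1}^M,(I_{\mathcal{X}}(X_j))_{j=1}^N): I(\phi)=\top\}\subseteq\mathbb{B}^M\times\mathbb{R}^N$. $\mathcal{P}(\mathbb{B}^M)$ is the power set, $\mathcal{B}(\mathbb{R}^N)$ the Borel $\sigma$-algebra, and $\mathcal{P}(\mathbb{B}^M)\times\mathcal{B}(\mathbb{R}^N)$ the product $\sigma$-algebra generated by sets $A\times B$ with $A\subseteq\mathbb{B}^M$, $B\in\mathcal{B}(\mathbb{R}^N)$. A formula is called measurable if its set of models lies in this $\sigma$-algebra, and a theory is measurable if all its formulas are. *)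

theory Defs
  imports "HOL-Analysis.Analysis"
begin

datatype 'n rterm =
    RVar 'n
  | RConst real
  | RAdd "'n rterm" "'n rterm"
  | RMul "'n rterm" "'n rterm"
  | RPow "'n rterm" "'n rterm"

primrec eval_rterm :: "'n rterm \<Rightarrow> (real ^ 'n) \<Rightarrow> real" where
  "eval_rterm (RVar j) x = x $ j"
| "eval_rterm (RConst c) x = c"
| "eval_rterm (RAdd s t) x = eval_rterm s x + eval_rterm t x"
| "eval_rterm (RMul s t) x = eval_rterm s x * eval_rterm t x"
| "eval_rterm (RPow s t) x = eval_rterm s x powr eval_rterm t x"

text \<open>SMT formulas over Boolean variables indexed by 'm and real variables
  indexed by 'n. A real atom is "s \<le> t", i.e. theta-hat = s - t \<le> 0.\<close>
datatype ('m, 'n) smt_formula =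
    BAtom 'm
  | RAtom "'n rterm" "'n rterm"
  | FNot "('m, 'n) smt_formula"
  | FAnd "('m, 'n) smt_formula" "('m, 'n) smt_formula"
  | FOr "('m, 'n) smt_formula" "('m, 'n) smt_formula"

primrec holds :: "('m, 'n) smt_formula \<Rightarrow> (bool ^ 'm) \<times> (real ^ 'n) \<Rightarrow> bool" where
  "holds (BAtom i) I = (fst I $ i)"
| "holds (RAtom s t) I = (eval_rterm s (snd I) \<le> eval_rterm t (snd I))"
| "holds (FNot f) I = (\<not> holds f I)"
| "holds (FAnd f g) I = (holds f I \<and> holds g I)"
| "holds (FOr f g) I = (holds f I \<or> holds g I)"

definition models :: "('m, 'n) smt_formula \<Rightarrow> ((bool ^ 'm) \<times> (real ^ 'n)) set" where
  "models f = {I. holds f I}"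

definition smt_space :: "((bool ^ 'm) \<times> (real ^ 'n)) measure" where
  "smt_space = (count_space UNIV \<Otimes>\<^sub>M (borel :: (real ^ 'n) measure))"

definition measurable_formula :: "('m::finite, 'n::finite) smt_formula \<Rightarrow> bool" where
  "measurable_formula f \<longleftrightarrow> models f \<in> sets smt_space"

primrec closed_rterm :: "'n rterm \<Rightarrow> bool" where
  "closed_rterm (RVar j) = False"
| "closed_rterm (RConst c) = True"
| "closed_rterm (RAdd s t) = (closed_rterm s \<and> closed_rterm t)"
| "closed_rterm (RMul s t) = (closed_rterm s \<and> closed_rterm t)"
| "closed_rterm (RPow s t) = (closed_rterm s \<and> closed_rterm t)"

primrec linear_rterm :: "'n rterm \<Rightarrow> bool" where
  "linear_rterm (RVar j) = True"
| "linear_rterm (RConst c) = True"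
| "linear_rterm (RAdd s t) = (linear_rterm s \<and> linear_rterm t)"
| "linear_rterm (RMul s t) =
     ((closed_rterm s \<and> linear_rterm t) \<or> (linear_rterm s \<and> closed_rterm t))"
| "linear_rterm (RPow s t) = closed_rterm (RPow s t)"

primrec poly_rterm :: "'n rterm \<Rightarrow> bool" where
  "poly_rterm (RVar j) = True"
| "poly_rterm (RConst c) = True"
| "poly_rterm (RAdd s t) = (poly_rterm s \<and> poly_rterm t)"
| "poly_rterm (RMul s t) = (poly_rterm s \<and> poly_rterm t)"
| "poly_rterm (RPow s t) =
     (closed_rterm (RPow s t) \<or> (poly_rterm s \<and> (\<exists>k::nat. t = RConst (real k))))"

primrec atoms_ok :: "('n rterm \<Rightarrow> bool) \<Rightarrow> ('m, 'n) smt_formula \<Rightarrow> bool" where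
  "atoms_ok P (BAtom i) = True"
| "atoms_ok P (RAtom s t) = (P s \<and> P t)"
| "atoms_ok P (FNot f) = atoms_ok P f"
| "atoms_ok P (FAnd f g) = (atoms_ok P f \<and> atoms_ok P g)"
| "atoms_ok P (FOr f g) = (atoms_ok P f \<and> atoms_ok P g)"

definition SMT_LRA :: "('m, 'n) smt_formula set" where
  "SMT_LRA = {f. atoms_ok linear_rterm f}"

definition SMT_NRA :: "('m, 'n) smt_formula set" where
  "SMT_NRA = {f. atoms_ok poly_rterm f}"

definition SMT_RA :: "('m, 'n) smt_formula set" where
  "SMT_RA = UNIV"

definition measurable_theory :: "('m::finite, 'n::finite) smt_formula set \<Rightarrow> bool" where
  "measurable_theory T \<longleftrightarrow> (\<forall>f\<in>T. measurable_formula f)"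

end

theory Submission
  imports Defs
begin

text \<open>Every term evaluates to a Borel function of the real variables (powr is Borel
  measurable in both arguments), so each real atom is a Borel set, each Boolean atom is
  a cylinder over the discrete factor, and the connectives preserve measurability.
  Hence every formula is measurable, which covers all three fragments at once.\<close>

lemma borel_measurable_eval_rterm [measurable]: "eval_rterm t \<in> borel_measurable borel"
  by (induction t) (simp_all add: borel_measurable_nth)

lemma measurable_holds:
  fixes f :: "('m::finite, 'n::finite) smt_formula"
  shows "Measurable.pred smt_space (holds f)"
  unfolding smt_space_def by (induction f) simp_all

lemma space_smt_space [simp]: "space smt_space = UNIV"
  by (simp add: smt_space_def space_pair_measure)

lemma measurable_formula_any: "measurable_formula f"
  using predE[OF measurable_holds[of f]]
  by (simp add: measurable_formula_def models_def)

theorem lemma14: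
  shows "measurable_theory (SMT_LRA :: ('m::finite, 'n::finite) smt_formula set)
       \<and> measurable_theory (SMT_NRA :: ('m, 'n) smt_formula set)
       \<and> measurable_theory (SMT_RA :: ('m, 'n) smt_formula set)"
  by (simp add: measurable_theory_def measurable_formula_any)

end
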